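(* Let $n\in\mathbb{N}$, $\varkappa\in\mathbb{N}^n$, $N=|\varkappa|$, $m\in\mathbb{N}_0$, and let $y_1,\ldots,y_n$ be indeterminates (or pairwise distinct elements of a field). Then \[ \hom_m\bigl(y^{[\varkappa]}\bigr)=\frac{\det G_{(m)}(y,\varkappa)}{\det G_\emptyset(y,\varkappa)}, \] where $(m)$ is the one-part partition (and $(0)=\emptyset$).
   Context: $\mathbb{N}=\{1,2,\ldots\}$, $\mathbb{N}_0=\{0,1,2,\ldots\}$. $\hom_m(x_1,\ldots,x_N)=\sum_{k\in\mathbb{N}_0^N,\,|k|=m}x_1^{k_1}\cdots x_N^{k_N}$ is the complete homogeneous symmetric polynomial. For $\varkappa\in\mathbb{N}^n$, $y^{[\varkappa]}$ denotes the list of length $|\varkappa|$ in which $y_1$ is repeated $\varkappa_1$ times, then $y_2$ repeated $\varkappa_2$ times, etc. Partitions are extended by zeros to length $N$. Each $p\in\{1,\ldots,N\}$ is written uniquely as $p=\varkappa_1+\cdots+\varkappa_{q-1}+r$ with $1\le q\le n$, $1\le r\le\varkappa_q$. For a partition $\lambda$ of length $\le N$, $G_\lambda(y,\varkappa)$ is the $N\times N$ matrix with entries $G_\lambda(y,\varkappa)_{j,p}=\binom{N+\lambda_j-j}{r-1}y_q^{N+\lambda_j-j-r+1}$ if $N+\lambda_j-j-r+1\ge0$ and $0$ otherwise. *)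

theory Defs
  imports "Jordan_Normal_Form.Determinant"
begin

definition hom_sym :: "nat \<Rightarrow> 'a::comm_ring_1 list \<Rightarrow> 'a" where
  "hom_sym m xs = (\<Sum>k\<in>{k::nat\<Rightarrow>nat. (\<forall>i\<ge>length xs. k i = 0) \<and> (\<Sum>i<length xs. k i) = m}.
                      \<Prod>i<length xs. (xs ! i) ^ k i)"

definition rep_list :: "nat \<Rightarrow> (nat \<Rightarrow> 'a) \<Rightarrow> (nat \<Rightarrow> nat) \<Rightarrow> 'a list" where
  "rep_list n y \<kappa> = concat (map (\<lambda>i. replicate (\<kappa> i) (y i)) [1..<n+1])"

text \<open>Decomposition p = kappa_1 + ... + kappa_(q-1) + r with 1 \<le> r \<le> kappa_q.\<close>
definition blk_q :: "(nat \<Rightarrow> nat) \<Rightarrow> nat \<Rightarrow> nat" where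
  "blk_q \<kappa> p = (LEAST q. p \<le> (\<Sum>i=1..q. \<kappa> i))"

definition blk_r :: "(nat \<Rightarrow> nat) \<Rightarrow> nat \<Rightarrow> nat" where
  "blk_r \<kappa> p = p - (\<Sum>i=1..blk_q \<kappa> p - 1. \<kappa> i)"

text \<open>The N x N matrix G_lambda(y,kappa), N = |kappa|; lambda is a 1-indexed partition
  (extended by zeros). JNF matrices are 0-indexed, so entry (j0,p0) is G_{j0+1,p0+1}.\<close>
definition G_mat :: "(nat \<Rightarrow> nat) \<Rightarrow> nat \<Rightarrow> (nat \<Rightarrow> 'a::comm_ring_1) \<Rightarrow> (nat \<Rightarrow> nat) \<Rightarrow> 'a mat" where
  "G_mat lam n y \<kappa> = (let N = (\<Sum>i=1..n. \<kappa> i) in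
     mat N N (\<lambda>(j0, p0).
       let j = j0 + 1; p = p0 + 1; q = blk_q \<kappa> p; r = blk_r \<kappa> p;
           e = int N + int (lam j) - int j - int r + 1
       in if e \<ge> 0 then of_nat ((N + lam j - j) choose (r - 1)) * y q ^ nat e else 0))"

definition one_part :: "nat \<Rightarrow> nat \<Rightarrow> nat" where
  "one_part m = (\<lambda>j. if j = 1 then m else 0)"

definition empty_part :: "nat \<Rightarrow> nat" where
  "empty_part = (\<lambda>_. 0)"

end

theory Submission
  imports Defs
begin

text \<open>Column \<open>p = (q, r)\<close> of \<open>G\<^sub>\<lambda>(y, \<kappa>)\<close> applies the functional
  \<open>f \<mapsto> f\<^bsup>(r-1)\<^esup>(y\<^sub>q) / (r-1)!\<close> (a Taylor coefficient) to the monomials \<open>x\<^bsup>N+\<lambda>\<^sub>j-j\<^esup>\<close>,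
  and, the \<open>y\<^sub>q\<close> being distinct, the \<open>N\<close> functionals together vanish exactly on the multiples of \<open>P = \<Prod>\<^sub>q (x - y\<^sub>q)\<^bsup>\<kappa>\<^sub>q\<^esup>\<close>.
  For \<open>\<lambda> = \<emptyset>\<close> the rows are \<open>x\<^bsup>N-1\<^esup>, \<dots>, 1\<close>, and a vanishing combination of them would be a
  nonzero polynomial of degree \<open>< N\<close> divisible by \<open>P\<close>; so \<open>det G\<^sub>\<emptyset> \<noteq> 0\<close>. For \<open>\<lambda> = (m)\<close> only the
  first row changes, to \<open>x\<^bsup>N-1+m\<^esup>\<close>, and it may be replaced by the remainder of \<open>x\<^bsup>N-1+m\<^esup>\<close> modulo
  \<open>P\<close>. Expanding the remainder in the rows of \<open>G\<^sub>\<emptyset>\<close>, the ratio of the determinants is its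
  coefficient of \<open>x\<^bsup>N-1\<^esup>\<close>, which Newton interpolation identifies with \<open>h\<^sub>m(y\<^bsup>[\<kappa>]\<^esup>)\<close>.\<close>

definition weak_compositions :: "nat \<Rightarrow> nat \<Rightarrow> (nat \<Rightarrow> nat) set" where
  "weak_compositions L m = {k. (\<forall>i\<ge>L. k i = 0) \<and> (\<Sum>i<L. k i) = m}"

lemma hom_sym_weak_compositions:
  "hom_sym m xs = (\<Sum>k\<in>weak_compositions (length xs) m. \<Prod>i<length xs. xs ! i ^ k i)"
  unfolding hom_sym_def weak_compositions_def ..

lemma finite_weak_compositions: "finite (weak_compositions L m)"
proof (rule finite_subset)
  show "weak_compositions L m \<subseteq> {k. \<forall>i. (i \<in> {..<L} \<longrightarrow> k i \<in> {..m}) \<and> (i \<notin> {..<L} \<longrightarrow> k i = 0)}"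
    unfolding weak_compositions_def
    by (auto intro: order.trans[OF member_le_sum[of _ "{..<L}"]])
qed (intro finite_set_of_finite_funs; simp)

lemma weak_compositions_Suc:
  "bij_betw (\<lambda>k. (k 0, k \<circ> Suc)) (weak_compositions (Suc L) m)
     (SIGMA i:{..m}. weak_compositions L (m - i))"
proof (rule bij_betwI[where g = "\<lambda>(i, k). case_nat i k"])
  show "(\<lambda>k. (k 0, k \<circ> Suc)) \<in> weak_compositions (Suc L) m \<rightarrow> (SIGMA i:{..m}. weak_compositions L (m - i))"
    by (auto simp: weak_compositions_def sum.lessThan_Suc_shift simp del: sum.lessThan_Suc)
  show "(\<lambda>(i, k). case_nat i k) \<in> (SIGMA i:{..m}. weak_compositions L (m - i)) \<rightarrow> weak_compositions (Suc L) m"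
    by (auto simp: weak_compositions_def sum.lessThan_Suc_shift simp del: sum.lessThan_Suc split: nat.split)
qed (auto split: nat.split)

lemma hom_sym_Nil [simp]: "hom_sym m [] = (if m = 0 then 1 else 0)"
proof -
  have "weak_compositions 0 m = (if m = 0 then {\<lambda>_. 0} else {})"
    by (auto simp: weak_compositions_def)
  then show ?thesis by (simp add: hom_sym_weak_compositions)
qed

lemma hom_sym_Cons: "hom_sym m (a # xs) = (\<Sum>i\<le>m. a ^ i * hom_sym (m - i) xs)"
proof -
  let ?L = "length xs"
  have "hom_sym m (a # xs) = (\<Sum>k\<in>weak_compositions (Suc ?L) m. a ^ k 0 * (\<Prod>i<?L. xs ! i ^ (k \<circ> Suc) i))"
    by (simp add: hom_sym_weak_compositions prod.lessThan_Suc_shift del: prod.lessThan_Suc)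
  also have "\<dots> = (\<Sum>(i, k)\<in>(SIGMA i:{..m}. weak_compositions ?L (m - i)). a ^ i * (\<Prod>j<?L. xs ! j ^ k j))"
    using sum.reindex_bij_betw[OF weak_compositions_Suc, of "\<lambda>(i, k). a ^ i * (\<Prod>j<?L. xs ! j ^ k j)"]
    by simp
  also have "\<dots> = (\<Sum>i\<le>m. a ^ i * hom_sym (m - i) xs)"
    by (simp add: sum.Sigma[symmetric] finite_weak_compositions hom_sym_weak_compositions sum_distrib_left)
  finally show ?thesis .
qed

lemma hom_sym_0 [simp]: "hom_sym 0 xs = 1"
  by (induction xs) (simp_all add: hom_sym_Cons)

lemma hom_sym_singleton: "hom_sym m [a] = a ^ m"
  by (simp add: hom_sym_Cons if_distrib sum.delta' cong: if_cong)

lemma hom_sym_Suc_Cons: "hom_sym (Suc j) (a # xs) = a * hom_sym j (a # xs) + hom_sym (Suc j) xs"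
  by (simp add: hom_sym_Cons sum.atMost_Suc_shift sum_distrib_left mult.assoc del: sum.atMost_Suc)

lemma hom_sym_Cons_diff:
  "hom_sym (Suc j) (t # zs) - hom_sym (Suc j) (b # zs) = (t - b) * hom_sym j (t # b # zs)"
proof (induction j)
  case 0
  then show ?case by (simp add: hom_sym_Suc_Cons[of 0] algebra_simps)
next
  case (Suc j)
  have "hom_sym (Suc (Suc j)) (t # zs) - hom_sym (Suc (Suc j)) (b # zs)
      = t * (hom_sym (Suc j) (t # zs) - hom_sym (Suc j) (b # zs)) + (t - b) * hom_sym (Suc j) (b # zs)"
    by (simp only: hom_sym_Suc_Cons[of "Suc j"]) (simp add: algebra_simps)
  also have "\<dots> = (t - b) * hom_sym (Suc j) (t # b # zs)"
    using Suc by (simp only: hom_sym_Suc_Cons[of j t "b # zs"]) (simp add: algebra_simps)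
  finally show ?case .
qed

lemma (in comm_ring_hom) hom_sym_map: "hom_sym m (map hom xs) = hom (hom_sym m xs)"
  by (induction xs arbitrary: m) (simp_all add: hom_sym_Cons hom_distribs)

interpretation const_poly_hom: comm_ring_hom "\<lambda>x::'a::comm_ring_1. [:x:]"
  by unfold_locales (simp_all add: mult_to_poly)

lemma X_pow_eq_monom: "([:0, 1:] :: 'a::comm_semiring_1 poly) ^ n = monom 1 n"
  by (simp add: monom_altdef)

definition poly_of_roots :: "'a::comm_ring_1 list \<Rightarrow> 'a poly" where
  "poly_of_roots xs = (\<Prod>x\<leftarrow>xs. [:-x, 1:])"

lemma poly_of_roots_Cons: "poly_of_roots (x # xs) = [:-x, 1:] * poly_of_roots xs"
  by (simp add: poly_of_roots_def)

lemma coeff_poly_of_roots: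
  "coeff (poly_of_roots xs) (length xs) = 1" "length xs < i \<Longrightarrow> coeff (poly_of_roots xs) i = 0"
proof (induction xs arbitrary: i)
  case (Cons x xs)
  { case 1 show ?case using Cons.IH by (simp add: poly_of_roots_Cons mult_pCons_left) }
  { case 2 then show ?case using Cons.IH
      by (cases i) (simp_all add: poly_of_roots_Cons mult_pCons_left) }
qed (simp_all add: poly_of_roots_def coeff_pCons split: nat.split)

lemma degree_poly_of_roots: "degree (poly_of_roots xs) = length xs"
  using coeff_poly_of_roots by (metis degree_le le_antisym le_degree one_neq_zero)

lemma poly_of_roots_rep_list: "poly_of_roots (rep_list n y \<kappa>) = (\<Prod>q=1..n. [:-y q, 1:] ^ \<kappa> q)"
proof -
  have "poly_of_roots (rep_list n y \<kappa>) = (\<Prod>q\<leftarrow>[1..<n+1]. [:-y q, 1:] ^ \<kappa> q)"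
    by (induction n) (simp_all add: rep_list_def poly_of_roots_def prod_list_replicate)
  also have "\<dots> = (\<Prod>q\<in>set [1..<n+1]. [:-y q, 1:] ^ \<kappa> q)"
    by (rule prod.distinct_set_conv_list[symmetric]) simp
  also have "set [1..<n+1] = {1..n}"
    by auto
  finally show ?thesis .
qed

text \<open>Newton interpolation: modulo polynomials of degree \<open>< L\<close>, the quotient of \<open>x\<^bsup>L+k\<^esup>\<close> by
  \<open>\<Prod>\<^sub>i (x - x\<^sub>i)\<close> is \<open>h\<^sub>k(x, x\<^sub>1, \<dots>, x\<^sub>L)\<close>, and adding a node \<open>b\<close> splits off the constant
  \<open>h\<^sub>k\<^sub>+\<^sub>1(b, x\<^sub>1, \<dots>, x\<^sub>L)\<close> (by \<open>hom_sym_Cons_diff\<close>).\<close>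
lemma X_pow_divmod_poly_of_roots:
  "\<exists>R. [:0, 1:] ^ (length xs + k) = R + hom_sym k ([:0, 1:] # map (\<lambda>x. [:x:]) xs) * poly_of_roots xs
     \<and> (\<forall>i\<ge>length xs. coeff R i = 0) \<and> coeff R (length xs - 1) = hom_sym (Suc k) xs"
proof (induction xs arbitrary: k)
  case Nil
  show ?case by (intro exI[of _ 0]) (simp add: poly_of_roots_def hom_sym_singleton)
next
  case (Cons b ys)
  let ?L = "length ys" and ?X = "[:0, 1:] :: 'a poly" and ?ys = "map (\<lambda>x. [:x:]) ys"
  define c where "c = hom_sym (Suc k) (b # ys)"
  obtain R where R: "?X ^ (?L + Suc k) = R + hom_sym (Suc k) (?X # ?ys) * poly_of_roots ys"
    "\<forall>i\<ge>?L. coeff R i = 0"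
    using Cons.IH by blast
  have "hom_sym (Suc k) (?X # ?ys) - hom_sym (Suc k) ([:b:] # ?ys) = (?X - [:b:]) * hom_sym k (?X # [:b:] # ?ys)"
    by (rule hom_sym_Cons_diff)
  moreover have "hom_sym (Suc k) ([:b:] # ?ys) = [:c:]"
    using const_poly_hom.hom_sym_map[of "Suc k" "b # ys"] by (simp add: c_def)
  ultimately have H: "hom_sym (Suc k) (?X # ?ys) = [:c:] + [:-b, 1:] * hom_sym k (?X # [:b:] # ?ys)"
    by (simp add: algebra_simps)
  have "?X ^ (length (b # ys) + k) = ?X ^ (?L + Suc k)"
    by simp
  also have "\<dots> = R + ([:c:] + [:-b, 1:] * hom_sym k (?X # [:b:] # ?ys)) * poly_of_roots ys"
    unfolding R(1) H ..
  also have "\<dots> = (R + smult c (poly_of_roots ys))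
      + hom_sym k (?X # map (\<lambda>x. [:x:]) (b # ys)) * poly_of_roots (b # ys)"
    by (simp add: poly_of_roots_Cons algebra_simps)
  finally have "?X ^ (length (b # ys) + k) = \<dots>" .
  moreover have "\<forall>i\<ge>length (b # ys). coeff (R + smult c (poly_of_roots ys)) i = 0"
    using R(2) coeff_poly_of_roots(2)[of ys] by (auto simp: Suc_le_eq)
  moreover have "coeff (R + smult c (poly_of_roots ys)) (length (b # ys) - 1) = c"
    using R(2) coeff_poly_of_roots(1)[of ys] by simp
  ultimately show ?case unfolding c_def by blast
qed

lemma X_pow_remainder_poly_of_roots:
  assumes "xs \<noteq> []"
  obtains R Q where "[:0, 1:] ^ (length xs - 1 + m) = R + Q * poly_of_roots xs"
    and "\<forall>i\<ge>length xs. coeff R i = 0" and "coeff R (length xs - 1) = hom_sym m xs"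
proof (cases m)
  case 0
  show ?thesis
  proof (rule that)
    show "[:0, 1:] ^ (length xs - 1 + m) = monom 1 (length xs - 1) + 0 * poly_of_roots xs"
      unfolding 0 X_pow_eq_monom by simp
  qed (use assms 0 in \<open>auto simp flip: length_greater_0_conv\<close>)
next
  case (Suc k)
  obtain R where R: "[:0, 1:] ^ (length xs + k) = R + hom_sym k ([:0, 1:] # map (\<lambda>x. [:x:]) xs) * poly_of_roots xs"
    "\<forall>i\<ge>length xs. coeff R i = 0" "coeff R (length xs - 1) = hom_sym m xs"
    using X_pow_divmod_poly_of_roots[of xs k] Suc by blast
  have "length xs - 1 + m = length xs + k"
    using assms Suc by (simp flip: length_greater_0_conv)
  with R show ?thesis by (intro that) auto
qed

definition taylor_coeff :: "'a::comm_ring_1 \<Rightarrow> nat \<Rightarrow> 'a poly \<Rightarrow> 'a" where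
  "taylor_coeff a k f = coeff (f \<circ>\<^sub>p [:a, 1:]) k"

lemma taylor_coeff_add: "taylor_coeff a k (f + g) = taylor_coeff a k f + taylor_coeff a k g"
  by (simp add: taylor_coeff_def pcompose_add)

lemma taylor_coeff_lincomb:
  "taylor_coeff a k (\<Sum>i\<in>A. smult (c i) (f i)) = (\<Sum>i\<in>A. c i * taylor_coeff a k (f i))"
  by (simp add: taylor_coeff_def pcompose_sum pcompose_smult coeff_sum)

lemma pcompose_power: "(p ^ n) \<circ>\<^sub>p q = (p \<circ>\<^sub>p q) ^ n"
  by (induction n) (simp_all add: pcompose_mult pcompose_1)

lemma taylor_coeff_X_pow: "taylor_coeff a k ([:0, 1:] ^ i) = of_nat (i choose k) * a ^ (i - k)"
proof (cases "k \<le> i")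
  case True
  then show ?thesis
    using coeff_linear_poly_power[of k i a 1]
    by (simp add: taylor_coeff_def pcompose_power pcompose_pCons pcompose_1)
next
  case False
  have "degree ([:a, 1:] ^ i) \<le> i"
    using degree_power_le[of "[:a, 1:]" i] by simp
  with False show ?thesis
    by (simp add: taylor_coeff_def pcompose_power pcompose_pCons pcompose_1 binomial_eq_0 coeff_eq_0)
qed

lemma linear_power_dvd_iff_taylor_coeffs:
  "[:-a, 1:] ^ K dvd f \<longleftrightarrow> (\<forall>k<K. taylor_coeff a k f = 0)"
proof -
  have shift: "[:-a, 1:] \<circ>\<^sub>p [:a, 1:] = [:0, 1:]" "[:a, 1:] \<circ>\<^sub>p [:-a, 1:] = [:0, 1:]"
    by (simp_all add: pcompose_pCons pcompose_1)
  have "[:-a, 1:] ^ K dvd f \<longleftrightarrow> monom 1 K dvd f \<circ>\<^sub>p [:a, 1:]"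
  proof
    assume "[:-a, 1:] ^ K dvd f"
    then obtain g where "f = [:-a, 1:] ^ K * g" ..
    then have "f \<circ>\<^sub>p [:a, 1:] = monom 1 K * (g \<circ>\<^sub>p [:a, 1:])"
      using shift by (simp add: pcompose_mult pcompose_power flip: X_pow_eq_monom)
    then show "monom 1 K dvd f \<circ>\<^sub>p [:a, 1:]" ..
  next
    assume "monom 1 K dvd f \<circ>\<^sub>p [:a, 1:]"
    then obtain g where g: "f \<circ>\<^sub>p [:a, 1:] = monom 1 K * g" ..
    have "f = (f \<circ>\<^sub>p [:a, 1:]) \<circ>\<^sub>p [:-a, 1:]"
      using shift pcompose_idR[of f] by (simp add: pcompose_assoc[symmetric])
    also have "\<dots> = [:-a, 1:] ^ K * (g \<circ>\<^sub>p [:-a, 1:])"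
      unfolding g by (simp add: pcompose_mult pcompose_power pcompose_pCons pcompose_1 flip: X_pow_eq_monom)
    finally show "[:-a, 1:] ^ K dvd f" ..
  qed
  then show ?thesis
    by (simp add: monom_1_dvd_iff' taylor_coeff_def)
qed

lemma prod_linear_powers_dvd:
  fixes y :: "'b \<Rightarrow> 'a::field"
  assumes "finite Q" "inj_on y Q" "\<And>q. q \<in> Q \<Longrightarrow> [:-y q, 1:] ^ K q dvd f"
  shows "(\<Prod>q\<in>Q. [:-y q, 1:] ^ K q) dvd f"
  using assms
proof (induction Q rule: finite_induct)
  case (insert q Q)
  show ?case
  proof (cases "f = 0")
    case False
    from insert obtain g where g: "f = (\<Prod>q\<in>Q. [:-y q, 1:] ^ K q) * g"
      by (auto elim: dvdE)
    have "poly (\<Prod>q\<in>Q. [:-y q, 1:] ^ K q) (y q) \<noteq> 0"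
      using insert.hyps insert.prems(1) by (auto simp: poly_prod)
    then have "order (y q) f = order (y q) g"
      using False by (simp add: g order_mult order_0I)
    moreover have "K q \<le> order (y q) f"
      using insert.prems(2)[of q] order_divides[of "y q" "K q" f] False by simp
    ultimately have "[:-y q, 1:] ^ K q dvd g"
      using order_divides[of "y q" "K q" g] by simp
    then show ?thesis
      using insert.hyps by (simp add: g mult_dvd_mono)
  qed simp
qed simp

definition block_end :: "(nat \<Rightarrow> nat) \<Rightarrow> nat \<Rightarrow> nat" where
  "block_end \<kappa> q = (\<Sum>i=1..q. \<kappa> i)"

lemma block_end_mono: "q' \<le> q \<Longrightarrow> block_end \<kappa> q' \<le> block_end \<kappa> q"
  unfolding block_end_def by (intro sum_mono2) auto

lemma block_end_pred: "1 \<le> q \<Longrightarrow> block_end \<kappa> q = block_end \<kappa> (q - 1) + \<kappa> q"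
  by (cases q) (simp_all add: block_end_def)

lemma blk_q_eq_Least: "blk_q \<kappa> p = (LEAST q. p \<le> block_end \<kappa> q)"
  by (simp add: blk_q_def block_end_def)

lemma blk_r_eq: "blk_r \<kappa> p = p - block_end \<kappa> (blk_q \<kappa> p - 1)"
  by (simp add: blk_r_def block_end_def)

lemma blk_bounds:
  assumes "1 \<le> p" "p \<le> block_end \<kappa> n"
  shows "blk_q \<kappa> p \<in> {1..n}" and "1 \<le> blk_r \<kappa> p" and "blk_r \<kappa> p \<le> \<kappa> (blk_q \<kappa> p)"
proof -
  let ?q = "blk_q \<kappa> p"
  have le: "p \<le> block_end \<kappa> ?q"
    unfolding blk_q_eq_Least using assms(2) by (rule LeastI)
  have "?q \<le> n"
    unfolding blk_q_eq_Least using assms(2) by (rule Least_le)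
  moreover have "?q \<noteq> 0"
  proof
    assume "?q = 0"
    then show False
      using le assms(1) by (simp add: block_end_def)
  qed
  moreover have "\<not> p \<le> block_end \<kappa> (?q - 1)"
    unfolding blk_q_eq_Least by (rule not_less_Least) (use \<open>?q \<noteq> 0\<close> in \<open>simp add: blk_q_eq_Least\<close>)
  ultimately show "?q \<in> {1..n}" "1 \<le> blk_r \<kappa> p" "blk_r \<kappa> p \<le> \<kappa> ?q"
    using le block_end_pred[of ?q \<kappa>] by (auto simp: blk_r_eq)
qed

lemma blk_block_end_add:
  assumes "1 \<le> q" "1 \<le> r" "r \<le> \<kappa> q"
  shows "blk_q \<kappa> (block_end \<kappa> (q - 1) + r) = q" and "blk_r \<kappa> (block_end \<kappa> (q - 1) + r) = r"
proof -
  show q: "blk_q \<kappa> (block_end \<kappa> (q - 1) + r) = q"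
    unfolding blk_q_eq_Least
  proof (rule Least_equality)
    show "block_end \<kappa> (q - 1) + r \<le> block_end \<kappa> q"
      using assms block_end_pred[of q \<kappa>] by simp
  next
    fix q' assume q': "block_end \<kappa> (q - 1) + r \<le> block_end \<kappa> q'"
    show "q \<le> q'"
    proof (rule ccontr)
      assume "\<not> q \<le> q'"
      then have "block_end \<kappa> q' \<le> block_end \<kappa> (q - 1)"
        by (intro block_end_mono) simp
      then show False
        using q' assms(2) by simp
    qed
  qed
  show "blk_r \<kappa> (block_end \<kappa> (q - 1) + r) = r"
    unfolding blk_r_eq q by simp
qed

lemma length_rep_list: "length (rep_list n y \<kappa>) = block_end \<kappa> n"
proof -
  have "length (rep_list n y \<kappa>) = (\<Sum>q\<leftarrow>[1..<n+1]. \<kappa> q)"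
    by (simp add: rep_list_def length_concat comp_def)
  also have "\<dots> = (\<Sum>q\<in>set [1..<n+1]. \<kappa> q)"
    by (rule sum.distinct_set_conv_list[symmetric]) simp
  also have "set [1..<n+1] = {1..n}"
    by auto
  finally show ?thesis
    unfolding block_end_def .
qed

definition G_column_functional :: "(nat \<Rightarrow> nat) \<Rightarrow> (nat \<Rightarrow> 'a::comm_ring_1) \<Rightarrow> nat \<Rightarrow> 'a poly \<Rightarrow> 'a" where
  "G_column_functional \<kappa> y p0 = taylor_coeff (y (blk_q \<kappa> (Suc p0))) (blk_r \<kappa> (Suc p0) - 1)"

lemma G_mat_carrier: "G_mat lam n y \<kappa> \<in> carrier_mat (block_end \<kappa> n) (block_end \<kappa> n)"
  by (simp add: G_mat_def block_end_def)

lemma G_mat_entry: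
  assumes "j0 < block_end \<kappa> n" "p0 < block_end \<kappa> n"
  shows "G_mat lam n y \<kappa> $$ (j0, p0)
    = G_column_functional \<kappa> y p0 ([:0, 1:] ^ (block_end \<kappa> n + lam (Suc j0) - Suc j0))"
proof -
  define N where "N = block_end \<kappa> n"
  define r where "r = blk_r \<kappa> (Suc p0)"
  define a where "a = N + lam (Suc j0) - Suc j0"
  have "1 \<le> r"
    using blk_bounds(2)[of "Suc p0" \<kappa> n] assms(2) by (simp add: r_def)
  then have e: "int N + int (lam (Suc j0)) - int (Suc j0) - int r + 1 = int a - int (r - 1)"
    using assms(1) by (simp add: a_def N_def of_nat_diff)
  have "G_mat lam n y \<kappa> $$ (j0, p0) = (if int N + int (lam (Suc j0)) - int (Suc j0) - int r + 1 \<ge> 0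
      then of_nat (a choose (r - 1)) * y (blk_q \<kappa> (Suc p0))
        ^ nat (int N + int (lam (Suc j0)) - int (Suc j0) - int r + 1) else 0)"
    using assms unfolding G_mat_def Let_def block_end_def N_def r_def a_def by simp
  also have "\<dots> = of_nat (a choose (r - 1)) * y (blk_q \<kappa> (Suc p0)) ^ (a - (r - 1))"
    unfolding e by (simp add: binomial_eq_0 of_nat_diff[symmetric] del: of_nat_diff)
  also have "\<dots> = G_column_functional \<kappa> y p0 ([:0, 1:] ^ a)"
    unfolding G_column_functional_def taylor_coeff_X_pow r_def by (rule refl)
  finally show ?thesis
    by (simp add: a_def N_def)
qed

lemma G_column_functional_vanishes:
  assumes "p0 < block_end \<kappa> n"
  shows "G_column_functional \<kappa> y p0 (g * (\<Prod>q=1..n. [:-y q, 1:] ^ \<kappa> q)) = 0"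
proof -
  define q where "q = blk_q \<kappa> (Suc p0)"
  have q: "q \<in> {1..n}" "blk_r \<kappa> (Suc p0) - 1 < \<kappa> q"
    using blk_bounds[of "Suc p0" \<kappa> n] assms by (auto simp: q_def)
  then have "[:-y q, 1:] ^ \<kappa> q dvd g * (\<Prod>q=1..n. [:-y q, 1:] ^ \<kappa> q)"
    by (intro dvd_mult dvd_prodI) auto
  with q(2) show ?thesis
    unfolding G_column_functional_def linear_power_dvd_iff_taylor_coeffs q_def by simp
qed

lemma dvd_if_G_column_functionals_vanish:
  fixes y :: "nat \<Rightarrow> 'a::field"
  assumes "inj_on y {1..n}" and "\<And>p0. p0 < block_end \<kappa> n \<Longrightarrow> G_column_functional \<kappa> y p0 f = 0"
  shows "(\<Prod>q=1..n. [:-y q, 1:] ^ \<kappa> q) dvd f"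
proof (rule prod_linear_powers_dvd)
  fix q assume q: "q \<in> {1..n}"
  show "[:-y q, 1:] ^ \<kappa> q dvd f"
    unfolding linear_power_dvd_iff_taylor_coeffs
  proof (intro allI impI)
    fix k assume k: "k < \<kappa> q"
    define p0 where "p0 = block_end \<kappa> (q - 1) + k"
    have "block_end \<kappa> (q - 1) + \<kappa> q \<le> block_end \<kappa> n"
      using q block_end_pred[of q \<kappa>] block_end_mono[of q n \<kappa>] by simp
    then have "G_column_functional \<kappa> y p0 f = 0"
      using k by (intro assms(2)) (simp add: p0_def)
    moreover have "blk_q \<kappa> (Suc p0) = q" "blk_r \<kappa> (Suc p0) = Suc k"
      using blk_block_end_add[of q "Suc k" \<kappa>] q k by (simp_all add: p0_def)
    ultimately show "taylor_coeff (y q) k f = 0"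
      by (simp add: G_column_functional_def)
  qed
qed (use assms(1) in simp_all)

lemma det_first_row_lincomb:
  fixes A B :: "'a::comm_ring_1 mat"
  assumes A: "A \<in> carrier_mat N N" and B: "B \<in> carrier_mat N N" and "0 < N"
    and rows: "\<And>i j. 0 < i \<Longrightarrow> i < N \<Longrightarrow> j < N \<Longrightarrow> B $$ (i, j) = A $$ (i, j)"
    and row0: "\<And>j. j < N \<Longrightarrow> B $$ (0, j) = (\<Sum>k<N. c k * A $$ (k, j))"
  shows "det B = c 0 * det A"
proof -
  define E where "E = mat N N (\<lambda>(i, j). if i = 0 then c j else if i = j then 1 else 0)"
  have E: "E \<in> carrier_mat N N"
    by (simp add: E_def)
  have "upper_triangular E"
    by (auto simp: upper_triangular_def E_def)
  then have "det E = (\<Prod>i=0..<N. E $$ (i, i))"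
    using E by (simp add: det_upper_triangular prod_list_diag_prod)
  also have "\<dots> = (\<Prod>i=0..<N. if i = 0 then c 0 else 1)"
    by (intro prod.cong) (auto simp: E_def)
  also have "\<dots> = c 0"
    using \<open>0 < N\<close> by (simp add: prod.delta)
  finally have detE: "det E = c 0" .
  have "B = E * A"
  proof (rule eq_matI)
    fix i j assume "i < dim_row (E * A)" "j < dim_col (E * A)"
    then have ij: "i < N" "j < N"
      using A E by auto
    have EA: "(E * A) $$ (i, j) = (\<Sum>k<N. E $$ (i, k) * A $$ (k, j))"
      using ij A E by (simp add: scalar_prod_def atLeast0LessThan)
    show "B $$ (i, j) = (E * A) $$ (i, j)"
    proof (cases "i = 0")
      case True
      then show ?thesis
        using ij unfolding EA by (simp add: row0 E_def)
    next
      case False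
      have "(\<Sum>k<N. E $$ (i, k) * A $$ (k, j)) = (\<Sum>k<N. if k = i then A $$ (k, j) else 0)"
        using ij False by (intro sum.cong) (auto simp: E_def)
      then show ?thesis
        using ij False unfolding EA by (simp add: rows)
    qed
  qed (use A B E in auto)
  then show ?thesis
    by (simp add: det_mult[OF E A] detE)
qed

lemma det_G_empty_nonzero:
  fixes y :: "nat \<Rightarrow> 'a::field"
  assumes "inj_on y {1..n}"
  shows "det (G_mat empty_part n y \<kappa>) \<noteq> 0"
proof
  define N where "N = block_end \<kappa> n"
  define A where "A = G_mat empty_part n y \<kappa>"
  have A: "A \<in> carrier_mat N N"
    by (simp add: A_def N_def G_mat_carrier)
  assume "det (G_mat empty_part n y \<kappa>) = 0"
  then have "det (transpose_mat A) = 0"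
    using det_transpose[OF A] by (simp add: A_def)
  then obtain v where v: "v \<in> carrier_vec N" "v \<noteq> 0\<^sub>v N" "transpose_mat A *\<^sub>v v = 0\<^sub>v N"
    using det_0_iff_vec_prod_zero_field[of "transpose_mat A" N] A by auto
  obtain j0 where j0: "j0 < N" "v $ j0 \<noteq> 0"
    using v(1,2) by (metis eq_vecI carrier_vecD index_zero_vec(1,2))
  define f where "f = (\<Sum>j<N. monom (v $ j) (N - Suc j))"
  have coeff_f: "coeff f (N - Suc j) = v $ j" if "j < N" for j
  proof -
    have "coeff f (N - Suc j) = (\<Sum>i<N. if i = j then v $ i else 0)"
      unfolding f_def coeff_sum using that by (intro sum.cong) auto
    then show ?thesis
      using that by simp
  qed
  have "(\<Prod>q=1..n. [:-y q, 1:] ^ \<kappa> q) dvd f"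
  proof (rule dvd_if_G_column_functionals_vanish[OF assms])
    fix p0 assume p0: "p0 < block_end \<kappa> n"
    have "G_column_functional \<kappa> y p0 f = (\<Sum>j<N. v $ j * G_column_functional \<kappa> y p0 ([:0, 1:] ^ (N - Suc j)))"
      by (simp add: f_def G_column_functional_def monom_altdef taylor_coeff_lincomb)
    also have "\<dots> = (\<Sum>j<N. A $$ (j, p0) * v $ j)"
      using p0 by (intro sum.cong) (simp_all add: A_def N_def G_mat_entry empty_part_def)
    also have "\<dots> = (transpose_mat A *\<^sub>v v) $ p0"
      using p0 A v(1) by (simp add: N_def scalar_prod_def atLeast0LessThan mult.commute)
    finally show "G_column_functional \<kappa> y p0 f = 0"
      using v(3) p0 by (simp add: N_def)
  qed
  moreover have "f \<noteq> 0"
    using coeff_f[OF j0(1)] j0(2) by auto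
  ultimately have "degree (\<Prod>q=1..n. [:-y q, 1:] ^ \<kappa> q) \<le> degree f"
    by (rule dvd_imp_degree_le)
  moreover have "degree f \<le> N - 1"
    unfolding f_def by (intro degree_sum_le) (auto intro: degree_monom_le[THEN order_trans])
  ultimately show False
    using j0(1) degree_poly_of_roots[of "rep_list n y \<kappa>"]
    by (simp add: poly_of_roots_rep_list length_rep_list N_def)
qed

lemma G_one_part_first_row:
  fixes R Q :: "'a::comm_ring_1 poly" and \<kappa> :: "nat \<Rightarrow> nat" and n :: nat
  defines "N \<equiv> block_end \<kappa> n"
  assumes RQ: "[:0, 1:] ^ (N - 1 + m) = R + Q * (\<Prod>q=1..n. [:-y q, 1:] ^ \<kappa> q)"
    and R: "\<forall>i\<ge>N. coeff R i = 0" and p0: "p0 < N"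
  shows "G_mat (one_part m) n y \<kappa> $$ (0, p0) = (\<Sum>k<N. coeff R (N - Suc k) * G_mat empty_part n y \<kappa> $$ (k, p0))"
proof -
  let ?F = "G_column_functional \<kappa> y p0"
  have "R = (\<Sum>k\<le>N - 1. monom (coeff R k) k)"
    using R p0 by (intro poly_as_sum_of_monoms'[symmetric] degree_le) auto
  also have "{..N - 1} = {..<N}"
    using p0 by auto
  finally have R_sum: "R = (\<Sum>k<N. smult (coeff R k) ([:0, 1:] ^ k))"
    by (simp add: monom_altdef)
  have "G_mat (one_part m) n y \<kappa> $$ (0, p0) = ?F ([:0, 1:] ^ (N - 1 + m))"
    using p0 G_mat_entry[of 0 \<kappa> n p0 "one_part m" y] by (simp add: N_def one_part_def add.commute)
  also have "\<dots> = ?F R"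
    unfolding RQ G_column_functional_def taylor_coeff_add
    using G_column_functional_vanishes[of p0 \<kappa> n y Q] p0 by (simp add: N_def G_column_functional_def)
  also have "\<dots> = (\<Sum>k<N. coeff R k * ?F ([:0, 1:] ^ k))"
    by (subst R_sum) (simp add: G_column_functional_def taylor_coeff_lincomb)
  also have "\<dots> = (\<Sum>k<N. coeff R (N - Suc k) * ?F ([:0, 1:] ^ (N - Suc k)))"
    by (rule sum.nat_diff_reindex[symmetric])
  also have "\<dots> = (\<Sum>k<N. coeff R (N - Suc k) * G_mat empty_part n y \<kappa> $$ (k, p0))"
    using p0 by (intro sum.cong) (simp_all add: G_mat_entry N_def empty_part_def)
  finally show ?thesis .
qed

lemma det_G_one_part:
  fixes R Q :: "'a::comm_ring_1 poly" and \<kappa> :: "nat \<Rightarrow> nat" and n :: nat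
  defines "N \<equiv> block_end \<kappa> n"
  assumes "0 < N" and RQ: "[:0, 1:] ^ (N - 1 + m) = R + Q * (\<Prod>q=1..n. [:-y q, 1:] ^ \<kappa> q)"
    and R: "\<forall>i\<ge>N. coeff R i = 0"
  shows "det (G_mat (one_part m) n y \<kappa>) = coeff R (N - 1) * det (G_mat empty_part n y \<kappa>)"
proof -
  have "det (G_mat (one_part m) n y \<kappa>) = coeff R (N - Suc 0) * det (G_mat empty_part n y \<kappa>)"
  proof (rule det_first_row_lincomb[where c = "\<lambda>k. coeff R (N - Suc k)"])
    show "G_mat empty_part n y \<kappa> \<in> carrier_mat N N" "G_mat (one_part m) n y \<kappa> \<in> carrier_mat N N"
      by (simp_all add: G_mat_carrier N_def)
    show "G_mat (one_part m) n y \<kappa> $$ (i, j) = G_mat empty_part n y \<kappa> $$ (i, j)"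
      if "0 < i" "i < N" "j < N" for i j
      using that by (simp add: G_mat_entry N_def one_part_def empty_part_def)
    show "G_mat (one_part m) n y \<kappa> $$ (0, j) = (\<Sum>k<N. coeff R (N - Suc k) * G_mat empty_part n y \<kappa> $$ (k, j))"
      if "j < N" for j
      using G_one_part_first_row[OF RQ[unfolded N_def] R[unfolded N_def]] that by (simp add: N_def)
  qed (use \<open>0 < N\<close> in simp)
  then show ?thesis
    by simp
qed

theorem corollary2:
  fixes n m :: nat and \<kappa> :: "nat \<Rightarrow> nat" and y :: "nat \<Rightarrow> 'a::field"
  assumes "n \<ge> 1"
    and "\<forall>i\<in>{1..n}. \<kappa> i \<ge> 1"
    and "\<forall>i\<in>{1..n}. \<forall>j\<in>{1..n}. i \<noteq> j \<longrightarrow> y i \<noteq> y j"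
  shows "hom_sym m (rep_list n y \<kappa>) = det (G_mat (one_part m) n y \<kappa>) / det (G_mat empty_part n y \<kappa>)"
proof -
  define N where "N = block_end \<kappa> n"
  define xs where "xs = rep_list n y \<kappa>"
  have "0 < \<kappa> 1"
    using assms(1,2) by (simp add: Suc_le_eq)
  then have "0 < N"
    using assms(1) block_end_mono[of 1 n \<kappa>] by (simp add: N_def block_end_def)
  then have "xs \<noteq> []"
    using length_rep_list[of n y \<kappa>] by (auto simp: xs_def N_def)
  then obtain R Q where RQ: "[:0, 1:] ^ (N - 1 + m) = R + Q * (\<Prod>q=1..n. [:-y q, 1:] ^ \<kappa> q)"
    and R: "\<forall>i\<ge>N. coeff R i = 0" "coeff R (N - 1) = hom_sym m xs"
    by (rule X_pow_remainder_poly_of_roots) (simp_all add: xs_def N_def length_rep_list poly_of_roots_rep_list)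
  have "det (G_mat (one_part m) n y \<kappa>) = hom_sym m xs * det (G_mat empty_part n y \<kappa>)"
    using det_G_one_part[of \<kappa> n m R Q y] \<open>0 < N\<close> RQ R by (simp add: N_def)
  moreover have "det (G_mat empty_part n y \<kappa>) \<noteq> 0"
    using assms(3) by (intro det_G_empty_nonzero) (auto simp: inj_on_def)
  ultimately show ?thesis
    by (simp add: xs_def)
qed

end
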